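(* Let $X$ be a convex metric space over a Boolean ring $B$, $0\in X$, and $R=\{x_{1},\ldots,x_{n}\}$ a referential of $(X,0)$. Let $Y$ be a convex metric space over $B$ and $0'\in Y$. A map $f:R\to Y$ extends to a contractive map $\hat{f}:X\to Y$ with $\hat f(0)=0'$ if and only if $d(0',f(x_{i}))\le d(0,x_{i})$ for $i=1,\ldots,n$; moreover such an extension is unique.
   Context: $B$ is a Boolean ring ($a\vee b=a+b+ab$, $a\le b\iff ab=a$; $a_1\oplus\cdots\oplus a_n$ denotes a sum of pairwise disjoint elements). A Boolean metric space over $B$: set $X$ with $d:X\times X\to B$, $d(x,y)=0\iff x=y$, symmetric, $d(x,z)\le d(x,y)\vee d(y,z)$. For $x_1,\dots,x_n\in X$, $a_i\in B$ with $a_1\oplus\cdots\oplus a_n=1$, $x$ is a convex combination of the $x_i$ with coefficients $a_i$ if $a_id(x,x_i)=0$ for all $i$; $X$ is convex if all such combinations exist. A map is contractive if $d(f(x),f(y))\le d(x,y)$. In $(X,0)$: $|x|=d(0,x)$; $x\perp y$ iff $d(x,y)=|x|\vee|y|$; a finite $R\subseteq X$ is orthogonal if $0\notin R$ and distinct elements are orthogonal; a referential of $(X,0)$ is an orthogonal $R$ such that every element of $X$ is a convex combination of elements of $R\cup\{0\}$. *)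

theory Defs
  imports Main
begin

text \<open>We use the class combination comm_ring + comm_monoid_mult (which does not force 0 \<noteq> 1)
  together with an explicit idempotency hypothesis in the theorem.\<close>

definition bjoin :: "'b::{comm_ring,comm_monoid_mult} \<Rightarrow> 'b \<Rightarrow> 'b" where
  "bjoin a b = a + b + a * b"

definition ble :: "'b::{comm_ring,comm_monoid_mult} \<Rightarrow> 'b \<Rightarrow> bool" where
  "ble a b \<longleftrightarrow> a * b = a"

definition boolean_metric :: "'a set \<Rightarrow> ('a \<Rightarrow> 'a \<Rightarrow> 'b::{comm_ring,comm_monoid_mult}) \<Rightarrow> bool" where
  "boolean_metric X d \<longleftrightarrow>
     (\<forall>x\<in>X. \<forall>y\<in>X. d x y = 0 \<longleftrightarrow> x = y) \<and>
     (\<forall>x\<in>X. \<forall>y\<in>X. d x y = d y x) \<and>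
     (\<forall>x\<in>X. \<forall>y\<in>X. \<forall>z\<in>X. ble (d x z) (bjoin (d x y) (d y z)))"

definition partition_of_unity :: "nat \<Rightarrow> (nat \<Rightarrow> 'b::{comm_ring,comm_monoid_mult}) \<Rightarrow> bool" where
  "partition_of_unity n a \<longleftrightarrow>
     (\<forall>i<n. \<forall>j<n. i \<noteq> j \<longrightarrow> a i * a j = 0) \<and> (\<Sum>i<n. a i) = 1"

definition is_convex_comb ::
  "('a \<Rightarrow> 'a \<Rightarrow> 'b::{comm_ring,comm_monoid_mult}) \<Rightarrow> 'a \<Rightarrow> nat \<Rightarrow> (nat \<Rightarrow> 'a) \<Rightarrow> (nat \<Rightarrow> 'b) \<Rightarrow> bool" where
  "is_convex_comb d x n p a \<longleftrightarrow> partition_of_unity n a \<and> (\<forall>i<n. a i * d x (p i) = 0)"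

definition convex_bms :: "'a set \<Rightarrow> ('a \<Rightarrow> 'a \<Rightarrow> 'b::{comm_ring,comm_monoid_mult}) \<Rightarrow> bool" where
  "convex_bms X d \<longleftrightarrow>
     (\<forall>n p a. (\<forall>i<n. p i \<in> X) \<and> partition_of_unity n a \<longrightarrow>
        (\<exists>x\<in>X. is_convex_comb d x n p a))"

definition contractive ::
  "'a set \<Rightarrow> ('a \<Rightarrow> 'a \<Rightarrow> 'b::{comm_ring,comm_monoid_mult}) \<Rightarrow> ('c \<Rightarrow> 'c \<Rightarrow> 'b) \<Rightarrow> ('a \<Rightarrow> 'c) \<Rightarrow> bool" where
  "contractive X d d' f \<longleftrightarrow> (\<forall>x\<in>X. \<forall>y\<in>X. ble (d' (f x) (f y)) (d x y))"

definition bnorm :: "('a \<Rightarrow> 'a \<Rightarrow> 'b) \<Rightarrow> 'a \<Rightarrow> 'a \<Rightarrow> 'b" where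
  "bnorm d o0 x = d o0 x"

definition orth :: "('a \<Rightarrow> 'a \<Rightarrow> 'b::{comm_ring,comm_monoid_mult}) \<Rightarrow> 'a \<Rightarrow> 'a \<Rightarrow> 'a \<Rightarrow> bool" where
  "orth d o0 x y \<longleftrightarrow> d x y = bjoin (bnorm d o0 x) (bnorm d o0 y)"

definition orthogonal_set :: "('a \<Rightarrow> 'a \<Rightarrow> 'b::{comm_ring,comm_monoid_mult}) \<Rightarrow> 'a \<Rightarrow> 'a set \<Rightarrow> bool" where
  "orthogonal_set d o0 R \<longleftrightarrow> finite R \<and> o0 \<notin> R \<and>
     (\<forall>x\<in>R. \<forall>y\<in>R. x \<noteq> y \<longrightarrow> orth d o0 x y)"

definition referential ::
  "'a set \<Rightarrow> ('a \<Rightarrow> 'a \<Rightarrow> 'b::{comm_ring,comm_monoid_mult}) \<Rightarrow> 'a \<Rightarrow> 'a set \<Rightarrow> bool" where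
  "referential X d o0 R \<longleftrightarrow> R \<subseteq> X \<and> orthogonal_set d o0 R \<and>
     (\<forall>x\<in>X. \<exists>n p a. (\<forall>i<n. p i \<in> R \<union> {o0}) \<and> is_convex_comb d x n p a)"

end

theory Submission
  imports Defs
begin

(* Every point x of X is a convex combination of anchor points
   S = R \<union> {0}, say with coefficients a_i at p_i.  A contractive g must send x
   to a point lying within a_i-distance 0 of g(p_i), i.e. to the convex
   combination of the g(p_i) with the same coefficients; since convex
   combinations are unique, g is determined by its values on S (uniqueness).
   Conversely, if the anchor map F = f(0 := 0') is contractive on S, sending
   each x to the corresponding convex combination of the F(p_i) gives a
   contractive extension: bounds d'(F p_i, w) \<le> d(p_i, z) transfer to
   d'(y, w) \<le> d(x, z) along matching convex combinations.  Finally, by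
   orthogonality d(x_i, x_j) = |x_i| \<or> |x_j|, so F is contractive on S exactly
   when d(0', f x_i) \<le> |x_i| for all i. *)

section \<open>Order and join in a Boolean ring\<close>

lemma boolean_ring_add_self:
  fixes x :: "'b::{comm_ring,comm_monoid_mult}"
  assumes idem: "\<And>a::'b. a * a = a"
  shows "x + x = 0"
proof -
  have "x + x = (x + x) * (x + x)" by (rule idem[symmetric])
  also have "\<dots> = x * x + x * x + (x * x + x * x)" by (simp only: distrib_left distrib_right)
  finally have "(x + x) + (x + x) = (x + x) + 0" by (simp add: idem add.assoc)
  thus ?thesis by (rule add_left_imp_eq)
qed

lemma bjoin_comm: "bjoin (a::'b::{comm_ring,comm_monoid_mult}) b = bjoin b a"
  by (simp add: bjoin_def algebra_simps)

lemma ble_bjoin_left: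
  fixes u v w :: "'b::{comm_ring,comm_monoid_mult}"
  assumes idem: "\<And>a::'b. a * a = a" and "ble u v"
  shows "ble u (bjoin v w)"
proof -
  have uv: "u * v = u" using assms(2) by (simp add: ble_def)
  have "u * bjoin v w = u * v + u * w + (u * v) * w" by (simp add: bjoin_def algebra_simps)
  also have "\<dots> = u + (u * w + u * w)" using uv by (simp add: add.assoc)
  also have "\<dots> = u" by (simp add: boolean_ring_add_self[OF idem])
  finally show ?thesis by (simp add: ble_def)
qed

lemma bjoin_mono:
  fixes v w v' w' :: "'b::{comm_ring,comm_monoid_mult}"
  assumes idem: "\<And>a::'b. a * a = a" and "ble v v'" "ble w w'"
  shows "ble (bjoin v w) (bjoin v' w')"
proof -
  have v: "v * bjoin v' w' = v" using ble_bjoin_left[OF idem assms(2)] by (simp add: ble_def)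
  have w: "w * bjoin v' w' = w"
    using ble_bjoin_left[OF idem assms(3), of v'] by (simp add: ble_def bjoin_comm)
  have "bjoin v w * bjoin v' w' = v * bjoin v' w' + w * bjoin v' w' + v * (w * bjoin v' w')"
    by (simp add: bjoin_def algebra_simps)
  also have "\<dots> = v + w + v * w" by (simp only: v w)
  finally show ?thesis by (simp add: ble_def bjoin_def)
qed

lemma ble_trans [trans]: "ble (u::'b::{comm_ring,comm_monoid_mult}) v \<Longrightarrow> ble v w \<Longrightarrow> ble u w"
  unfolding ble_def by (metis mult.assoc)

text \<open>Inequalities localised to an element b: ble (b * u) v says u \<le> v "on b".\<close>
lemma ble_mult_left: "ble (u::'b::{comm_ring,comm_monoid_mult}) v \<Longrightarrow> ble (b * u) v"
  unfolding ble_def by (simp add: mult.assoc)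

lemma ble_mult_trans:
  "ble ((b::'b::{comm_ring,comm_monoid_mult}) * u) v \<Longrightarrow> ble (b * v) w \<Longrightarrow> ble (b * u) w"
  unfolding ble_def by (metis mult.assoc mult.commute)

lemma ble_bjoin_cancel:
  assumes "ble (u::'b::{comm_ring,comm_monoid_mult}) (bjoin w v)" "b * w = 0"
  shows "ble (b * u) v"
proof -
  have "u * (w + v + w * v) = u" using assms(1) by (simp add: ble_def bjoin_def)
  hence "b * u = u * (b * w) + b * u * v + u * (b * w) * v"
    by (metis (no_types, lifting) distrib_left mult.assoc mult.commute)
  thus ?thesis using assms(2) by (simp add: ble_def)
qed

lemma ble_mult_zero:
  "(b::'b::{comm_ring,comm_monoid_mult}) * v = 0 \<Longrightarrow> ble (b * u) v \<Longrightarrow> b * u = 0"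
  unfolding ble_def by (metis mult.assoc mult.commute mult_zero_right)

lemma partition_ble:
  fixes u v :: "'b::{comm_ring,comm_monoid_mult}"
  assumes "partition_of_unity n a" "\<And>i. i < n \<Longrightarrow> ble (a i * u) v"
  shows "ble u v"
proof -
  have one: "(\<Sum>i<n. a i) = 1" using assms(1) by (simp add: partition_of_unity_def)
  have "u * v = (\<Sum>i<n. a i * u * v)" by (simp add: one flip: sum_distrib_right)
  also have "\<dots> = (\<Sum>i<n. a i * u)" using assms(2) by (simp add: ble_def)
  also have "\<dots> = u" by (simp add: one flip: sum_distrib_right)
  finally show ?thesis by (simp add: ble_def)
qed

lemma partition_zero:
  fixes u :: "'b::{comm_ring,comm_monoid_mult}"
  assumes "partition_of_unity n a" "\<And>i. i < n \<Longrightarrow> a i * u = 0"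
  shows "u = 0"
proof -
  have one: "(\<Sum>i<n. a i) = 1" using assms(1) by (simp add: partition_of_unity_def)
  have "u = (\<Sum>i<n. a i * u)" by (simp add: one flip: sum_distrib_right)
  also have "\<dots> = 0" using assms(2) by simp
  finally show ?thesis .
qed

section \<open>Convex combinations in Boolean metric spaces\<close>

lemma bm_zero: "boolean_metric X d \<Longrightarrow> x \<in> X \<Longrightarrow> d x x = 0"
  by (simp add: boolean_metric_def)
lemma bm_eq: "boolean_metric X d \<Longrightarrow> x \<in> X \<Longrightarrow> y \<in> X \<Longrightarrow> d x y = 0 \<Longrightarrow> x = y"
  by (simp add: boolean_metric_def)
lemma bm_sym: "boolean_metric X d \<Longrightarrow> x \<in> X \<Longrightarrow> y \<in> X \<Longrightarrow> d x y = d y x"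
  by (simp add: boolean_metric_def)
lemma bm_tri: "boolean_metric X d \<Longrightarrow> x \<in> X \<Longrightarrow> y \<in> X \<Longrightarrow> z \<in> X \<Longrightarrow> ble (d x z) (bjoin (d x y) (d y z))"
  by (simp add: boolean_metric_def)

lemma bm_local_triangle:
  assumes "boolean_metric X d" "x \<in> X" "p \<in> X" "z \<in> X" "b * d x p = 0"
  shows "ble (b * d x z) (d p z)"
  using bm_tri[OF assms(1-4)] assms(5) by (rule ble_bjoin_cancel)

lemma convex_comb_unique:
  assumes Y: "boolean_metric Y d'" and in_Y: "y \<in> Y" "y' \<in> Y" "\<forall>i<n. q i \<in> Y"
    and cc: "is_convex_comb d' y n q a" "is_convex_comb d' y' n q a"
  shows "y = y'"
proof -
  have "a i * d' y y' = 0" if i: "i < n" for i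
  proof -
    have "a i * d' y (q i) = 0" "a i * d' (q i) y' = 0"
      using cc i bm_sym[OF Y in_Y(2)] in_Y(3) by (auto simp: is_convex_comb_def)
    thus ?thesis using bm_local_triangle[OF Y in_Y(1) _ in_Y(2)] in_Y(3) i
      by (metis ble_mult_zero)
  qed
  hence "d' y y' = 0" using cc(1) partition_zero by (auto simp: is_convex_comb_def)
  thus ?thesis using bm_eq[OF Y in_Y(1,2)] by simp
qed

lemma convex_comb_transfer:
  assumes X: "boolean_metric X d" and Y: "boolean_metric Y d'"
    and in_X: "x \<in> X" "z \<in> X" "\<forall>i<n. p i \<in> X" and in_Y: "y \<in> Y" "w \<in> Y" "\<forall>i<n. q i \<in> Y"
    and cc: "is_convex_comb d x n p a" "is_convex_comb d' y n q a"
    and bound: "\<forall>i<n. ble (d' (q i) w) (d (p i) z)"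
  shows "ble (d' y w) (d x z)"
proof (rule partition_ble)
  show "partition_of_unity n a" using cc(1) by (simp add: is_convex_comb_def)
next
  fix i assume i: "i < n"
  have "a i * d' y (q i) = 0" "a i * d (p i) x = 0"
    using cc i bm_sym[OF X in_X(1)] in_X(3) by (auto simp: is_convex_comb_def)
  hence "ble (a i * d' y w) (d' (q i) w)" "ble (a i * d (p i) z) (d x z)"
    using bm_local_triangle[OF Y] bm_local_triangle[OF X] in_X in_Y i by auto
  moreover have "ble (a i * d' (q i) w) (d (p i) z)" using bound i by (simp add: ble_mult_left)
  ultimately show "ble (a i * d' y w) (d x z)" by (metis ble_mult_trans)
qed

lemma dominated_is_convex_comb:
  assumes cc: "is_convex_comb d x n p a" and bound: "\<forall>i<n. ble (d' y (q i)) (d x (p i))"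
  shows "is_convex_comb d' y n q a"
  using assms ble_mult_zero ble_mult_left unfolding is_convex_comb_def by metis

section \<open>Contractive maps on convexly generating sets\<close>

definition convexly_generates :: "'a set \<Rightarrow> ('a \<Rightarrow> 'a \<Rightarrow> 'b::{comm_ring,comm_monoid_mult}) \<Rightarrow> 'a set \<Rightarrow> bool" where
  "convexly_generates X d S \<longleftrightarrow>
     (\<forall>x\<in>X. \<exists>n p a. (\<forall>i<n. p i \<in> S) \<and> is_convex_comb d x n p a)"

lemma contractive_extension_unique:
  assumes X: "boolean_metric X d" and Y: "boolean_metric Y d'"
    and S: "S \<subseteq> X" "convexly_generates X d S"
    and g: "\<forall>x\<in>X. g x \<in> Y" "contractive X d d' g"
    and h: "\<forall>x\<in>X. h x \<in> Y" "contractive X d d' h"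
    and agree: "\<forall>x\<in>S. g x = h x" and x: "x \<in> X"
  shows "g x = h x"
proof -
  obtain n p a where p: "\<forall>i<n. p i \<in> S" and cc: "is_convex_comb d x n p a"
    using S(2) x by (auto simp: convexly_generates_def)
  have bounds: "ble (d' (g x) (g (p i))) (d x (p i))" "ble (d' (h x) (g (p i))) (d x (p i))"
    if "i < n" for i
  proof -
    have pi: "p i \<in> X" "h (p i) = g (p i)" using p S(1) agree that by auto
    show "ble (d' (g x) (g (p i))) (d x (p i))" using g(2) x pi by (simp add: contractive_def)
    have "ble (d' (h x) (h (p i))) (d x (p i))" using h(2) x pi(1) by (simp add: contractive_def)
    thus "ble (d' (h x) (g (p i))) (d x (p i))" using pi(2) by simp
  qed
  have "is_convex_comb d' (g x) n (\<lambda>i. g (p i)) a" "is_convex_comb d' (h x) n (\<lambda>i. g (p i)) a"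
    using bounds by (auto intro!: dominated_is_convex_comb[OF cc])
  moreover have "\<forall>i<n. g (p i) \<in> Y" using g(1) p S(1) by auto
  ultimately show ?thesis using convex_comb_unique[OF Y] g(1) h(1) x by simp
qed

text \<open>A contractive map from a generating set into a convex space extends to a
  contractive map on X: send each point to the matching convex combination.\<close>
lemma contractive_extension_exists:
  assumes X: "boolean_metric X d" and Y: "boolean_metric Y d'" "convex_bms Y d'"
    and S: "S \<subseteq> X" "convexly_generates X d S"
    and F: "F ` S \<subseteq> Y" "contractive S d d' F"
  shows "\<exists>g. (\<forall>x\<in>X. g x \<in> Y) \<and> contractive X d d' g \<and> (\<forall>x\<in>S. g x = F x)"
proof -
  define matched where "matched x y \<longleftrightarrow> y \<in> Y \<and> (\<exists>n p a. (\<forall>i<n. p i \<in> S) \<and>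
      is_convex_comb d x n p a \<and> is_convex_comb d' y n (\<lambda>i. F (p i)) a)" for x y
  have "\<forall>x\<in>X. \<exists>y. matched x y"
  proof
    fix x assume "x \<in> X"
    then obtain n p a where p: "\<forall>i<n. p i \<in> S" and cc: "is_convex_comb d x n p a"
      using S(2) by (auto simp: convexly_generates_def)
    have "\<forall>i<n. F (p i) \<in> Y" "partition_of_unity n a"
      using p F(1) cc by (auto simp: is_convex_comb_def)
    then obtain y where "y \<in> Y" "is_convex_comb d' y n (\<lambda>i. F (p i)) a"
      using Y(2)[unfolded convex_bms_def, rule_format, of n "\<lambda>i. F (p i)" a] by blast
    thus "\<exists>y. matched x y" using p cc unfolding matched_def by blast
  qed
  then obtain g where g: "\<forall>x\<in>X. matched x (g x)" by (metis bchoice)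
  have gY: "g x \<in> Y" if "x \<in> X" for x using g that by (simp add: matched_def)
  have near: "ble (d' (F q) (g x)) (d q x)" if x: "x \<in> X" and q: "q \<in> S" for x q
  proof -
    obtain n p a where p: "\<forall>i<n. p i \<in> S" and cc: "is_convex_comb d x n p a"
        "is_convex_comb d' (g x) n (\<lambda>i. F (p i)) a"
      using g x by (auto simp: matched_def)
    have "\<forall>i<n. ble (d' (F (p i)) (F q)) (d (p i) q)" using F(2) p q by (simp add: contractive_def)
    hence "ble (d' (g x) (F q)) (d x q)"
      using convex_comb_transfer[OF X Y(1) x _ _ gY[OF x] _ _ cc] p q S(1) F(1) by blast
    moreover have "q \<in> X" "F q \<in> Y" using q S(1) F(1) by auto
    ultimately show ?thesis using bm_sym[OF X x] bm_sym[OF Y(1) gY[OF x]] by simp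
  qed
  have "contractive X d d' g" unfolding contractive_def
  proof (intro ballI)
    fix x y assume x: "x \<in> X" and y: "y \<in> X"
    obtain n q b where q: "\<forall>k<n. q k \<in> S" and cc: "is_convex_comb d y n q b"
        "is_convex_comb d' (g y) n (\<lambda>k. F (q k)) b"
      using g y by (auto simp: matched_def)
    have "ble (d' (g y) (g x)) (d y x)"
      using convex_comb_transfer[OF X Y(1) y x _ gY[OF y] gY[OF x] _ cc] near[OF x] q S(1) F(1)
      by blast
    thus "ble (d' (g x) (g y)) (d x y)" using bm_sym[OF X x y] bm_sym[OF Y(1) gY[OF x] gY[OF y]]
      by simp
  qed
  moreover have "g q = F q" if q: "q \<in> S" for q
  proof -
    have qXY: "q \<in> X" "F q \<in> Y" using q S(1) F(1) by auto
    have "ble (d' (F q) (g q)) 0" using near[OF qXY(1) q] bm_zero[OF X qXY(1)] by simp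
    hence "F q = g q" using bm_eq[OF Y(1) qXY(2) gY[OF qXY(1)]] by (simp add: ble_def)
    thus ?thesis by simp
  qed
  ultimately show ?thesis using gY by blast
qed

lemma referential_generates:
  "referential X d o0 R \<Longrightarrow> convexly_generates X d (insert o0 R)"
  by (auto simp: referential_def convexly_generates_def)

lemma anchor_map_contractive:
  fixes d :: "'a \<Rightarrow> 'a \<Rightarrow> 'b::{comm_ring,comm_monoid_mult}"
  assumes idem: "\<And>a::'b. a * a = a"
    and X: "boolean_metric X d" "o0 \<in> X" and R: "R \<subseteq> X" "orthogonal_set d o0 R"
    and Y: "boolean_metric Y d'" "o0' \<in> Y" and f: "f ` R \<subseteq> Y"
    and bound: "\<forall>x\<in>R. ble (d' o0' (f x)) (d o0 x)"
  shows "contractive (insert o0 R) d d' (f(o0 := o0'))"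
proof -
  have o0R: "o0 \<notin> R" using R(2) by (simp add: orthogonal_set_def)
  have sym: "d' o0' (f x) = d' (f x) o0'" "d o0 x = d x o0" if "x \<in> R" for x
    using bm_sym[OF Y(1) Y(2)] bm_sym[OF X] that f R(1) by auto
  have pair: "ble (d' (f x) (f y)) (d x y)" if xy: "x \<in> R" "y \<in> R" "x \<noteq> y" for x y
  proof -
    have fxy: "f x \<in> Y" "f y \<in> Y" using f xy by auto
    have "ble (d' (f x) (f y)) (bjoin (d' (f x) o0') (d' o0' (f y)))"
      by (rule bm_tri[OF Y(1) fxy(1) Y(2) fxy(2)])
    also have "ble \<dots> (bjoin (d o0 x) (d o0 y))"
      using bjoin_mono[OF idem] bound xy sym by metis
    finally show ?thesis
      using R(2) xy by (simp add: orthogonal_set_def orth_def bnorm_def)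
  qed
  have FY: "(f(o0 := o0')) x \<in> Y" if "x \<in> insert o0 R" for x using that f Y(2) by auto
  show ?thesis unfolding contractive_def
  proof (intro ballI)
    fix x y assume xy: "x \<in> insert o0 R" "y \<in> insert o0 R"
    then consider "x = y" | "x = o0" "y \<in> R" | "x \<in> R" "y = o0" | "x \<in> R" "y \<in> R" "x \<noteq> y"
      by blast
    thus "ble (d' ((f(o0 := o0')) x) ((f(o0 := o0')) y)) (d x y)"
    proof cases
      case 1
      thus ?thesis using bm_zero[OF Y(1) FY[OF xy(2)]] by (simp add: ble_def)
    next
      case 2
      thus ?thesis using bound o0R by auto
    next
      case 3
      thus ?thesis using bound sym o0R by auto
    next
      case 4
      thus ?thesis using pair o0R by auto
    qed
  qed
qed

theorem mainTheorem10:
  fixes X :: "'a set" and d :: "'a \<Rightarrow> 'a \<Rightarrow> 'b::{comm_ring,comm_monoid_mult}"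
    and Y :: "'c set" and d' :: "'c \<Rightarrow> 'c \<Rightarrow> 'b"
    and o0 :: 'a and o0' :: 'c and R :: "'a set" and f :: "'a \<Rightarrow> 'c"
  assumes boolean_ring: "\<And>a::'b. a * a = a"
    and X: "boolean_metric X d" "convex_bms X d" "o0 \<in> X"
    and R: "referential X d o0 R"
    and Y: "boolean_metric Y d'" "convex_bms Y d'" "o0' \<in> Y"
    and f: "f ` R \<subseteq> Y"
  shows "((\<exists>g. (\<forall>x\<in>X. g x \<in> Y) \<and> contractive X d d' g \<and> g o0 = o0' \<and> (\<forall>x\<in>R. g x = f x))
            \<longleftrightarrow> (\<forall>x\<in>R. ble (d' o0' (f x)) (d o0 x)))
       \<and> (\<forall>g h. (\<forall>x\<in>X. g x \<in> Y) \<and> contractive X d d' g \<and> g o0 = o0' \<and> (\<forall>x\<in>R. g x = f x)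
             \<and> (\<forall>x\<in>X. h x \<in> Y) \<and> contractive X d d' h \<and> h o0 = o0' \<and> (\<forall>x\<in>R. h x = f x)
             \<longrightarrow> (\<forall>x\<in>X. g x = h x))"
proof -
  have RX: "R \<subseteq> X" and orth: "orthogonal_set d o0 R" and o0R: "o0 \<notin> R"
    using R by (auto simp: referential_def orthogonal_set_def)
  have S: "insert o0 R \<subseteq> X" "convexly_generates X d (insert o0 R)"
    using RX X(3) referential_generates[OF R] by auto
  have "\<exists>g. (\<forall>x\<in>X. g x \<in> Y) \<and> contractive X d d' g \<and> g o0 = o0' \<and> (\<forall>x\<in>R. g x = f x)"
    if bound: "\<forall>x\<in>R. ble (d' o0' (f x)) (d o0 x)"
  proof -
    have "contractive (insert o0 R) d d' (f(o0 := o0'))"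
      by (rule anchor_map_contractive[OF boolean_ring X(1,3) RX orth Y(1,3) f bound])
    moreover have "(f(o0 := o0')) ` insert o0 R \<subseteq> Y" using f Y(3) by auto
    ultimately show ?thesis
      using contractive_extension_exists[OF X(1) Y(1,2) S] o0R by (metis fun_upd_apply insertCI)
  qed
  moreover have "\<forall>x\<in>R. ble (d' o0' (f x)) (d o0 x)"
    if "contractive X d d' g" "g o0 = o0'" "\<forall>x\<in>R. g x = f x" for g
    using that RX X(3) by (force simp: contractive_def)
  moreover have "g x = h x"
    if "\<forall>x\<in>X. g x \<in> Y" "contractive X d d' g" "g o0 = o0'" "\<forall>x\<in>R. g x = f x"
      "\<forall>x\<in>X. h x \<in> Y" "contractive X d d' h" "h o0 = o0'" "\<forall>x\<in>R. h x = f x" "x \<in> X" for g h x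
    using contractive_extension_unique[OF X(1) Y(1) S, of g h] that by simp
  ultimately show ?thesis by blast
qed

end
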